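(* Let $r\ge 0$ and $d\ge r+1$ be integers and $R=\mathbb{R}[x,y,z]$. Let $\ell_1,\ell_2,\ell_3\in R$ be homogeneous linear forms that are the homogenizations (with respect to $z$) of equations of three distinct lines in $\mathbb{R}^2$ passing through a common point $p$, and let $L\in R$ be the homogenization of an equation of a line in $\mathbb{R}^2$ not containing $p$. Then for every homogeneous polynomial $g\in R$ of degree $d$ there exist homogeneous $u,v\in R$ of degree $d$ and homogeneous $w\in R$ of degree $r-1$ such that \[\ell_3^{r+1}g=\ell_1^{r+1}u+\ell_2^{r+1}v+L^{d-r+1}\ell_3^{r+1}w,\] with $w=0$ when $r=0$. *)

theory Defs
  imports Complex_Main "HOL-Library.Poly_Mapping" "HOL-Library.Product_Plus"
begin

text \<open>Polynomials in R = real[x,y,z]: finitely supported maps from exponent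
  triples (i,j,k) (monomial x^i y^j z^k) to real coefficients; multiplication
  is the convolution product of Poly_Mapping.\<close>
type_synonym mpoly3 = "(nat \<times> nat \<times> nat) \<Rightarrow>\<^sub>0 real"

definition varX :: mpoly3 where "varX = Poly_Mapping.single (1,0,0) 1"
definition varY :: mpoly3 where "varY = Poly_Mapping.single (0,1,0) 1"
definition varZ :: mpoly3 where "varZ = Poly_Mapping.single (0,0,1) 1"
definition const3 :: "real \<Rightarrow> mpoly3" where "const3 c = Poly_Mapping.single (0,0,0) c"

definition mdeg :: "nat \<times> nat \<times> nat \<Rightarrow> nat" where
  "mdeg m = (case m of (i,j,k) \<Rightarrow> i + j + k)"

text \<open>Homogeneous of degree d (the zero polynomial counts as homogeneous of every degree).\<close>
definition homogeneous :: "nat \<Rightarrow> mpoly3 \<Rightarrow> bool" where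
  "homogeneous d p \<longleftrightarrow> (\<forall>m \<in> Poly_Mapping.keys p. mdeg m = d)"

definition line_set :: "real \<Rightarrow> real \<Rightarrow> real \<Rightarrow> (real \<times> real) set" where
  "line_set a b c = {(x,y). a * x + b * y + c = 0}"

definition homog_lin :: "real \<Rightarrow> real \<Rightarrow> real \<Rightarrow> mpoly3" where
  "homog_lin a b c = const3 a * varX + const3 b * varY + const3 c * varZ"

end

theory Submission
  imports Defs
begin

text \<open>Since \<ell>1 and \<ell>2 vanish at the homogenized point p and L does not, \<ell>1, \<ell>2, L form a
  basis of the linear forms and \<ell>3 = \<alpha> \<ell>1 + \<beta> \<ell>2. Hence every form of degree d is a combination
  of monomials \<ell>1^i \<ell>2^j L^k with i + j + k = d. If k \<ge> d - r + 1, then \<ell>3^(r+1) \<ell>1^i \<ell>2^j L^k is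
  L^(d-r+1) \<ell>3^(r+1) times a form of degree r - 1. Otherwise i + j \<ge> r, and expanding
  \<ell>3^(r+1) \<ell>1^i \<ell>2^j yields monomials \<ell>1^a \<ell>2^b with a + b \<ge> 2r + 1, each of which is divisible
  by \<ell>1^(r+1) or by \<ell>2^(r+1).\<close>

lemma zero_nat_triple: "(0, 0, 0) = (0 :: nat \<times> nat \<times> nat)"
  by (simp add: zero_prod_def)

lemma const3_add: "const3 (x + y) = const3 x + const3 y"
  by (simp add: const3_def single_add)

lemma const3_mult: "const3 (x * y) = const3 x * const3 y"
  by (simp add: const3_def mult_single)

lemma const3_one: "const3 1 = 1"
  by (simp add: const3_def zero_nat_triple)

lemma const3_zero: "const3 0 = 0"
  by (simp add: const3_def)

lemma homog_lin_linear_combination: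
  "homog_lin (s1*a1 + s2*a2 + s3*a3) (s1*b1 + s2*b2 + s3*b3) (s1*c1 + s2*c2 + s3*c3) =
     const3 s1 * homog_lin a1 b1 c1 + const3 s2 * homog_lin a2 b2 c2 + const3 s3 * homog_lin a3 b3 c3"
  unfolding homog_lin_def const3_add const3_mult by (simp add: algebra_simps)

lemma single_eq_monomial: "Poly_Mapping.single (i, j, k) c = const3 c * varX ^ i * varY ^ j * varZ ^ k"
proof -
  have "varX ^ i = Poly_Mapping.single (i, 0, 0) 1"
    by (induction i) (simp_all add: varX_def mult_single zero_nat_triple)
  moreover have "varY ^ j = Poly_Mapping.single (0, j, 0) 1"
    by (induction j) (simp_all add: varY_def mult_single zero_nat_triple)
  moreover have "varZ ^ k = Poly_Mapping.single (0, 0, k) 1"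
    by (induction k) (simp_all add: varZ_def mult_single zero_nat_triple)
  ultimately show ?thesis by (simp add: const3_def mult_single)
qed

lemma sum_single_lookup: "(\<Sum>m\<in>Poly_Mapping.keys g. Poly_Mapping.single m (Poly_Mapping.lookup g m)) = g"
  by (rule poly_mapping_eqI) (simp add: lookup_sum lookup_single when_def in_keys_iff)

lemma mdeg_add: "mdeg (m + n) = mdeg m + mdeg n"
  by (cases m; cases n) (simp add: mdeg_def)

lemma homogeneous_zero: "homogeneous n 0"
  by (simp add: homogeneous_def)

lemma homogeneous_add: "homogeneous n p \<Longrightarrow> homogeneous n q \<Longrightarrow> homogeneous n (p + q)"
  unfolding homogeneous_def using keys_add[of p q] by blast

lemma homogeneous_mult: "homogeneous m p \<Longrightarrow> homogeneous n q \<Longrightarrow> homogeneous (m + n) (p * q)"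
  unfolding homogeneous_def
proof (intro ballI)
  fix x assume "\<forall>m'\<in>Poly_Mapping.keys p. mdeg m' = m" "\<forall>n'\<in>Poly_Mapping.keys q. mdeg n' = n"
    and "x \<in> Poly_Mapping.keys (p * q)"
  moreover obtain u v where "x = u + v" "u \<in> Poly_Mapping.keys p" "v \<in> Poly_Mapping.keys q"
    using keys_mult[of p q] \<open>x \<in> Poly_Mapping.keys (p * q)\<close> by blast
  ultimately show "mdeg x = m + n" by (simp add: mdeg_add)
qed

lemma homogeneous_one: "homogeneous 0 1"
  by (simp add: homogeneous_def mdeg_def zero_prod_def)

lemma homogeneous_power: "homogeneous n p \<Longrightarrow> homogeneous (k * n) (p ^ k)"
  by (induction k) (simp_all add: homogeneous_one homogeneous_mult)

lemma homogeneous_power_linear: "homogeneous 1 p \<Longrightarrow> homogeneous k (p ^ k)"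
  using homogeneous_power[of 1 p k] by simp

lemma homogeneous_const3_mult: "homogeneous n p \<Longrightarrow> homogeneous n (const3 c * p)"
  using homogeneous_mult[of 0 "const3 c" n p] by (simp add: homogeneous_def const3_def mdeg_def)

lemma homogeneous_homog_lin: "homogeneous 1 (homog_lin a b c)"
proof -
  have "homogeneous 1 varX" "homogeneous 1 varY" "homogeneous 1 varZ"
    by (simp_all add: homogeneous_def varX_def varY_def varZ_def mdeg_def)
  then show ?thesis
    unfolding homog_lin_def by (intro homogeneous_add homogeneous_const3_mult)
qed

inductive_set monomial_span :: "mpoly3 \<Rightarrow> mpoly3 \<Rightarrow> mpoly3 \<Rightarrow> nat \<Rightarrow> mpoly3 set"
  for A B C n where
  zero: "0 \<in> monomial_span A B C n"
| add_monomial: "i + j + k = n \<Longrightarrow> q \<in> monomial_span A B C n \<Longrightarrow>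
    const3 c * A ^ i * B ^ j * C ^ k + q \<in> monomial_span A B C n"

lemma monomial_in_monomial_span:
  "i + j + k = n \<Longrightarrow> const3 c * A ^ i * B ^ j * C ^ k \<in> monomial_span A B C n"
  using monomial_span.add_monomial[OF _ monomial_span.zero] by simp

lemma monomial_span_add:
  "p \<in> monomial_span A B C n \<Longrightarrow> q \<in> monomial_span A B C n \<Longrightarrow> p + q \<in> monomial_span A B C n"
  by (induction p rule: monomial_span.induct) (auto simp: add.assoc intro: monomial_span.intros)

lemma monomial_span_sum:
  "finite K \<Longrightarrow> (\<And>m. m \<in> K \<Longrightarrow> f m \<in> monomial_span A B C n) \<Longrightarrow> sum f K \<in> monomial_span A B C n"
  by (induction K rule: finite_induct) (auto intro: monomial_span.zero monomial_span_add)

lemma monomial_span_mult_monomial: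
  assumes "q \<in> monomial_span A B C n"
  shows "const3 c * A ^ i * B ^ j * C ^ k * q \<in> monomial_span A B C (i + j + k + n)"
  using assms
proof (induction q rule: monomial_span.induct)
  case zero
  then show ?case by (simp add: monomial_span.zero)
next
  case (add_monomial i' j' k' q c')
  have "const3 c * A ^ i * B ^ j * C ^ k * (const3 c' * A ^ i' * B ^ j' * C ^ k' + q) =
      const3 (c * c') * A ^ (i + i') * B ^ (j + j') * C ^ (k + k') + const3 c * A ^ i * B ^ j * C ^ k * q"
    by (simp add: const3_mult power_add algebra_simps)
  then show ?case
    by (simp only:) (rule monomial_span.add_monomial, use add_monomial in auto)
qed

lemma monomial_span_mult:
  "p \<in> monomial_span A B C m \<Longrightarrow> q \<in> monomial_span A B C n \<Longrightarrow> p * q \<in> monomial_span A B C (m + n)"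
proof (induction p rule: monomial_span.induct)
  case zero
  then show ?case by (simp add: monomial_span.zero)
next
  case (add_monomial i j k p c)
  then show ?case
    using monomial_span_mult_monomial[OF add_monomial.prems, of c i j k]
    by (auto simp: distrib_right intro: monomial_span_add)
qed

lemma monomial_span_power: "p \<in> monomial_span A B C 1 \<Longrightarrow> p ^ k \<in> monomial_span A B C k"
proof (induction k)
  case 0
  show ?case using monomial_in_monomial_span[of 0 0 0 0 1 A B C] by (simp add: const3_one)
next
  case (Suc k)
  then show ?case using monomial_span_mult[of p A B C 1 "p ^ k" k] by simp
qed

lemma monomial_span_linear_form:
  "const3 s1 * A + const3 s2 * B + const3 s3 * C \<in> monomial_span A B C 1"
  using monomial_in_monomial_span[of 1 0 0 1 s1 A B C] monomial_in_monomial_span[of 0 1 0 1 s2 A B C]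
    monomial_in_monomial_span[of 0 0 1 1 s3 A B C]
  by (simp add: monomial_span_add)

lemma homogeneous_in_monomial_span:
  assumes X: "varX \<in> monomial_span A B C 1" and Y: "varY \<in> monomial_span A B C 1"
    and Z: "varZ \<in> monomial_span A B C 1" and g: "homogeneous d g"
  shows "g \<in> monomial_span A B C d"
proof -
  have "Poly_Mapping.single m (Poly_Mapping.lookup g m) \<in> monomial_span A B C d"
    if "m \<in> Poly_Mapping.keys g" for m
  proof -
    obtain i j k where m: "m = (i, j, k)" by (cases m)
    with g that have "i + j + k = d" by (auto simp: homogeneous_def mdeg_def)
    moreover have "varX ^ i * varY ^ j * varZ ^ k \<in> monomial_span A B C (i + j + k)"
      by (intro monomial_span_mult monomial_span_power X Y Z)
    ultimately have "const3 (Poly_Mapping.lookup g m) * (varX ^ i * varY ^ j * varZ ^ k) \<in> monomial_span A B C d"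
      using monomial_span_mult[OF monomial_in_monomial_span[of 0 0 0 0]] by fastforce
    then show ?thesis by (simp add: m single_eq_monomial mult.assoc)
  qed
  then have "(\<Sum>m\<in>Poly_Mapping.keys g. Poly_Mapping.single m (Poly_Mapping.lookup g m)) \<in> monomial_span A B C d"
    by (intro monomial_span_sum) auto
  then show ?thesis by (simp only: sum_single_lookup)
qed

lemma pure_powers_generate_high_degree:
  assumes A: "homogeneous 1 A" and B: "homogeneous 1 B" and C: "C = const3 \<alpha> * A + const3 \<beta> * B"
    and deg: "2 * r + 1 \<le> i + j + m"
  shows "\<exists>u v. homogeneous (i + j + m - (r + 1)) u \<and> homogeneous (i + j + m - (r + 1)) v \<and>
           A ^ i * B ^ j * C ^ m = A ^ (r + 1) * u + B ^ (r + 1) * v"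
  using deg
proof (induction m arbitrary: i j)
  case 0
  then consider "r + 1 \<le> i" | "r + 1 \<le> j" by linarith
  then show ?case
  proof cases
    case 1
    then have "A ^ i = A ^ (r + 1) * A ^ (i - (r + 1))"
      by (metis le_add_diff_inverse power_add)
    then have "A ^ i * B ^ j * C ^ 0 = A ^ (r + 1) * (A ^ (i - (r + 1)) * B ^ j) + B ^ (r + 1) * 0"
      by (simp add: mult.assoc)
    moreover have "homogeneous (i - (r + 1) + j) (A ^ (i - (r + 1)) * B ^ j)"
      by (intro homogeneous_mult homogeneous_power_linear A B)
    ultimately show ?thesis using 1 homogeneous_zero by (metis add_0_right add.commute add_diff_assoc2)
  next
    case 2
    then have "B ^ j = B ^ (r + 1) * B ^ (j - (r + 1))"
      by (metis le_add_diff_inverse power_add)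
    then have "A ^ i * B ^ j * C ^ 0 = A ^ (r + 1) * 0 + B ^ (r + 1) * (A ^ i * B ^ (j - (r + 1)))"
      by (simp add: mult.left_commute)
    moreover have "homogeneous (i + (j - (r + 1))) (A ^ i * B ^ (j - (r + 1)))"
      by (intro homogeneous_mult homogeneous_power_linear A B)
    ultimately show ?thesis using 2 homogeneous_zero by (metis add_0_right add_diff_assoc)
  qed
next
  case (Suc m)
  obtain u1 v1 where 1: "homogeneous (Suc i + j + m - (r + 1)) u1" "homogeneous (Suc i + j + m - (r + 1)) v1"
    "A ^ Suc i * B ^ j * C ^ m = A ^ (r + 1) * u1 + B ^ (r + 1) * v1"
    using Suc.IH[of "Suc i" j] Suc.prems by auto
  obtain u2 v2 where 2: "homogeneous (i + Suc j + m - (r + 1)) u2" "homogeneous (i + Suc j + m - (r + 1)) v2"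
    "A ^ i * B ^ Suc j * C ^ m = A ^ (r + 1) * u2 + B ^ (r + 1) * v2"
    using Suc.IH[of i "Suc j"] Suc.prems by auto
  have "A ^ i * B ^ j * C ^ Suc m = const3 \<alpha> * (A ^ Suc i * B ^ j * C ^ m) + const3 \<beta> * (A ^ i * B ^ Suc j * C ^ m)"
    by (simp add: C algebra_simps)
  also have "\<dots> = A ^ (r + 1) * (const3 \<alpha> * u1 + const3 \<beta> * u2) + B ^ (r + 1) * (const3 \<alpha> * v1 + const3 \<beta> * v2)"
    unfolding 1(3) 2(3) by (simp add: algebra_simps)
  finally show ?case using 1 2
    by (intro exI conjI) (auto intro!: homogeneous_add homogeneous_const3_mult)
qed

text \<open>The degree d + r + 1 component of the ideal (A^(r+1), B^(r+1), L^(d-r+1) C^(r+1)). The cofactor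
  w has degree r - 1, so it must vanish for r = 0, which the truncated r - 1 = 0 does not express.\<close>
definition power_ideal_component :: "mpoly3 \<Rightarrow> mpoly3 \<Rightarrow> mpoly3 \<Rightarrow> mpoly3 \<Rightarrow> nat \<Rightarrow> nat \<Rightarrow> mpoly3 set"
  where "power_ideal_component A B C L r d =
    {A ^ (r + 1) * u + B ^ (r + 1) * v + L ^ (d - r + 1) * C ^ (r + 1) * w | u v w.
       homogeneous d u \<and> homogeneous d v \<and> homogeneous (r - 1) w \<and> (r = 0 \<longrightarrow> w = 0)}"

lemma power_ideal_componentI:
  "homogeneous d u \<Longrightarrow> homogeneous d v \<Longrightarrow> homogeneous (r - 1) w \<Longrightarrow> (r = 0 \<longrightarrow> w = 0) \<Longrightarrow>
    A ^ (r + 1) * u + B ^ (r + 1) * v + L ^ (d - r + 1) * C ^ (r + 1) * w \<in> power_ideal_component A B C L r d"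
  unfolding power_ideal_component_def by blast

lemma power_ideal_componentE:
  assumes "p \<in> power_ideal_component A B C L r d"
  obtains u v w where "homogeneous d u" "homogeneous d v" "homogeneous (r - 1) w" "r = 0 \<longrightarrow> w = 0"
    "p = A ^ (r + 1) * u + B ^ (r + 1) * v + L ^ (d - r + 1) * C ^ (r + 1) * w"
  using assms unfolding power_ideal_component_def by blast

lemma power_ideal_component_zero: "0 \<in> power_ideal_component A B C L r d"
  using power_ideal_componentI[OF homogeneous_zero homogeneous_zero homogeneous_zero] by simp

lemma power_ideal_component_add:
  assumes "p \<in> power_ideal_component A B C L r d" "q \<in> power_ideal_component A B C L r d"
  shows "p + q \<in> power_ideal_component A B C L r d"
proof -
  obtain u v w u' v' w' where
    "homogeneous d u" "homogeneous d v" "homogeneous (r - 1) w" "r = 0 \<longrightarrow> w = 0"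
    "homogeneous d u'" "homogeneous d v'" "homogeneous (r - 1) w'" "r = 0 \<longrightarrow> w' = 0"
    and pq: "p = A ^ (r + 1) * u + B ^ (r + 1) * v + L ^ (d - r + 1) * C ^ (r + 1) * w"
      "q = A ^ (r + 1) * u' + B ^ (r + 1) * v' + L ^ (d - r + 1) * C ^ (r + 1) * w'"
    using assms by (elim power_ideal_componentE)
  moreover from pq have "p + q =
      A ^ (r + 1) * (u + u') + B ^ (r + 1) * (v + v') + L ^ (d - r + 1) * C ^ (r + 1) * (w + w')"
    by (simp add: algebra_simps)
  ultimately show ?thesis
    by (simp only:) (rule power_ideal_componentI, auto intro: homogeneous_add)
qed

lemma power_ideal_component_const3_mult:
  assumes "p \<in> power_ideal_component A B C L r d"
  shows "const3 c * p \<in> power_ideal_component A B C L r d"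
proof -
  obtain u v w where "homogeneous d u" "homogeneous d v" "homogeneous (r - 1) w" "r = 0 \<longrightarrow> w = 0"
    and p: "p = A ^ (r + 1) * u + B ^ (r + 1) * v + L ^ (d - r + 1) * C ^ (r + 1) * w"
    using assms by (elim power_ideal_componentE)
  moreover from p have "const3 c * p =
      A ^ (r + 1) * (const3 c * u) + B ^ (r + 1) * (const3 c * v) + L ^ (d - r + 1) * C ^ (r + 1) * (const3 c * w)"
    by (simp add: algebra_simps)
  ultimately show ?thesis
    by (simp only:) (rule power_ideal_componentI, auto intro: homogeneous_const3_mult)
qed

lemma power_times_monomial_in_power_ideal_component:
  assumes A: "homogeneous 1 A" and B: "homogeneous 1 B" and L: "homogeneous 1 L"
    and C: "C = const3 \<alpha> * A + const3 \<beta> * B"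
    and rd: "r + 1 \<le> d" and deg: "i + j + k = d"
  shows "C ^ (r + 1) * (A ^ i * B ^ j * L ^ k) \<in> power_ideal_component A B C L r d"
proof (cases "d - r + 1 \<le> k")
  case True
  define w where "w = A ^ i * B ^ j * L ^ (k - (d - r + 1))"
  have "i + j + (k - (d - r + 1)) = r - 1" and "r \<noteq> 0"
    using True deg rd by linarith+
  moreover have "homogeneous (i + j + (k - (d - r + 1))) w"
    unfolding w_def by (intro homogeneous_mult homogeneous_power_linear A B L)
  ultimately have w: "homogeneous (r - 1) w" "r = 0 \<longrightarrow> w = 0" by simp_all
  have "L ^ k = L ^ (d - r + 1) * L ^ (k - (d - r + 1))"
    using True by (metis le_add_diff_inverse power_add)
  then have "C ^ (r + 1) * (A ^ i * B ^ j * L ^ k) =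
      A ^ (r + 1) * 0 + B ^ (r + 1) * 0 + L ^ (d - r + 1) * C ^ (r + 1) * w"
    by (simp only: w_def mult_ac mult_zero_left mult_zero_right add_0_left)
  with w show ?thesis
    by (metis power_ideal_componentI homogeneous_zero)
next
  case False
  then have "2 * r + 1 \<le> i + j + (r + 1)" using deg rd by linarith
  then obtain u v where uv: "homogeneous (i + j) u" "homogeneous (i + j) v"
      "A ^ i * B ^ j * C ^ (r + 1) = A ^ (r + 1) * u + B ^ (r + 1) * v"
    using pure_powers_generate_high_degree[OF A B C] by fastforce
  have "homogeneous (k + (i + j)) (L ^ k * u)" "homogeneous (k + (i + j)) (L ^ k * v)"
    using uv by (auto intro: homogeneous_mult homogeneous_power_linear L)
  moreover have "C ^ (r + 1) * (A ^ i * B ^ j * L ^ k) =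
      A ^ (r + 1) * (L ^ k * u) + B ^ (r + 1) * (L ^ k * v) + L ^ (d - r + 1) * C ^ (r + 1) * 0"
  proof -
    have "C ^ (r + 1) * (A ^ i * B ^ j * L ^ k) = L ^ k * (A ^ i * B ^ j * C ^ (r + 1))"
      by (simp only: mult_ac)
    also have "\<dots> = L ^ k * (A ^ (r + 1) * u + B ^ (r + 1) * v)"
      by (simp only: uv(3))
    also have "\<dots> = A ^ (r + 1) * (L ^ k * u) + B ^ (r + 1) * (L ^ k * v)"
      by (simp add: algebra_simps)
    finally show ?thesis by simp
  qed
  ultimately show ?thesis
    using deg power_ideal_componentI[OF _ _ homogeneous_zero] by (simp add: add.commute)
qed

lemma power_times_monomial_span_in_power_ideal_component:
  assumes A: "homogeneous 1 A" and B: "homogeneous 1 B" and L: "homogeneous 1 L"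
    and C: "C = const3 \<alpha> * A + const3 \<beta> * B" and rd: "r + 1 \<le> d"
    and g: "g \<in> monomial_span A B L d"
  shows "C ^ (r + 1) * g \<in> power_ideal_component A B C L r d"
  using g
proof (induction g rule: monomial_span.induct)
  case zero
  then show ?case by (simp add: power_ideal_component_zero)
next
  case (add_monomial i j k q c)
  have "C ^ (r + 1) * (const3 c * A ^ i * B ^ j * L ^ k + q) =
      const3 c * (C ^ (r + 1) * (A ^ i * B ^ j * L ^ k)) + C ^ (r + 1) * q"
    by (simp add: algebra_simps)
  with add_monomial show ?case
    by (metis power_ideal_component_add power_ideal_component_const3_mult
        power_times_monomial_in_power_ideal_component[OF A B L C rd])
qed

lemma concurrent_distinct_lines_independent:
  fixes a1 b1 c1 a2 b2 c2 px py :: real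
  assumes ne1: "(a1, b1) \<noteq> (0, 0)" and ne2: "(a2, b2) \<noteq> (0, 0)"
    and distinct: "line_set a1 b1 c1 \<noteq> line_set a2 b2 c2"
    and p1: "(px, py) \<in> line_set a1 b1 c1" and p2: "(px, py) \<in> line_set a2 b2 c2"
  shows "a1*b2 - a2*b1 \<noteq> 0"
proof
  assume parallel: "a1*b2 - a2*b1 = 0"
  obtain l where l: "a2 = l*a1" "b2 = l*b1"
  proof (cases "a1 = 0")
    case True
    with ne1 parallel have "b1 \<noteq> 0" "a2 = 0" by auto
    with True show ?thesis by (intro that[of "b2/b1"]) auto
  next
    case False
    with parallel show ?thesis by (intro that[of "a2/a1"]) (auto simp: field_simps)
  qed
  with ne2 have "l \<noteq> 0" by auto
  have "c2 = -(a2*px + b2*py)" using p2 by (simp add: line_set_def)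
  also have "\<dots> = l * -(a1*px + b1*py)" using l by (simp add: algebra_simps)
  also have "-(a1*px + b1*py) = c1" using p1 by (simp add: line_set_def)
  finally have "c2 = l*c1" .
  then have "a2*x + b2*y + c2 = l*(a1*x + b1*y + c1)" for x y
    using l by (simp add: algebra_simps)
  with \<open>l \<noteq> 0\<close> distinct show False by (auto simp: line_set_def)
qed

lemma homog_lin_in_concurrent_basis:
  fixes a1 b1 c1 a2 b2 c2 a b c t1 t2 t3 px py :: real
  assumes indep: "a1*b2 - a2*b1 \<noteq> 0"
    and p1: "(px, py) \<in> line_set a1 b1 c1" and p2: "(px, py) \<in> line_set a2 b2 c2"
    and pL: "(px, py) \<notin> line_set a b c"
  obtains s1 s2 s3 where
    "homog_lin t1 t2 t3 = const3 s1 * homog_lin a1 b1 c1 + const3 s2 * homog_lin a2 b2 c2 + const3 s3 * homog_lin a b c"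
    "(px, py) \<in> line_set t1 t2 t3 \<Longrightarrow> s3 = 0"
proof -
  define s3 where "s3 = (t1*px + t2*py + t3) / (a*px + b*py + c)"
  define u1 where "u1 = t1 - s3*a"
  define u2 where "u2 = t2 - s3*b"
  define s1 where "s1 = (u1*b2 - u2*a2) / (a1*b2 - a2*b1)"
  define s2 where "s2 = (a1*u2 - b1*u1) / (a1*b2 - a2*b1)"
  have E: "a*px + b*py + c \<noteq> 0" and e1: "a1*px + b1*py + c1 = 0" and e2: "a2*px + b2*py + c2 = 0"
    using pL p1 p2 by (auto simp: line_set_def)
  have "s1*a1 + s2*a2 = u1" "s1*b1 + s2*b2 = u2"
    using indep by (simp_all add: s1_def s2_def divide_simps) (simp_all add: algebra_simps)
  then have x: "t1 = s1*a1 + s2*a2 + s3*a" and y: "t2 = s1*b1 + s2*b2 + s3*b"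
    by (simp_all add: u1_def u2_def)
  have "t1*px + t2*py + t3 = s3 * (a*px + b*py + c)"
    using E by (simp add: s3_def)
  also have "\<dots> = s1*(a1*px + b1*py + c1) + s2*(a2*px + b2*py + c2) + s3*(a*px + b*py + c)"
    using e1 e2 by simp
  finally have "t3 = s1*c1 + s2*c2 + s3*c"
    unfolding x y by (simp add: algebra_simps)
  moreover have "(px, py) \<in> line_set t1 t2 t3 \<Longrightarrow> s3 = 0"
    by (simp add: s3_def line_set_def)
  ultimately show ?thesis
    using that x y by (metis homog_lin_linear_combination)
qed

theorem lemma5p2:
  fixes r d :: nat
    and a1 b1 c1 a2 b2 c2 a3 b3 c3 a b c :: real
    and p :: "real \<times> real"
  assumes hd: "d \<ge> r + 1"
    and line1: "(a1, b1) \<noteq> (0, 0)" and line2: "(a2, b2) \<noteq> (0, 0)"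
    and line3: "(a3, b3) \<noteq> (0, 0)" and lineL: "(a, b) \<noteq> (0, 0)"
    and dist12: "line_set a1 b1 c1 \<noteq> line_set a2 b2 c2"
    and dist13: "line_set a1 b1 c1 \<noteq> line_set a3 b3 c3"
    and dist23: "line_set a2 b2 c2 \<noteq> line_set a3 b3 c3"
    and p1: "p \<in> line_set a1 b1 c1" and p2: "p \<in> line_set a2 b2 c2"
    and p3: "p \<in> line_set a3 b3 c3"
    and pL: "p \<notin> line_set a b c"
    and g: "homogeneous d g"
  shows "\<exists>u v w. homogeneous d u \<and> homogeneous d v \<and> homogeneous (r - 1) w \<and>
           (r = 0 \<longrightarrow> w = 0) \<and>
           (homog_lin a3 b3 c3) ^ (r + 1) * g =
             (homog_lin a1 b1 c1) ^ (r + 1) * u + (homog_lin a2 b2 c2) ^ (r + 1) * v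
             + (homog_lin a b c) ^ (d - r + 1) * (homog_lin a3 b3 c3) ^ (r + 1) * w"
proof -
  obtain px py where p: "p = (px, py)" by (cases p)
  let ?A = "homog_lin a1 b1 c1" and ?B = "homog_lin a2 b2 c2" and ?C = "homog_lin a3 b3 c3"
    and ?L = "homog_lin a b c"
  note p1 = p1[unfolded p] and p2 = p2[unfolded p] and p3 = p3[unfolded p] and pL = pL[unfolded p]
  have indep: "a1*b2 - a2*b1 \<noteq> 0"
    using concurrent_distinct_lines_independent[OF line1 line2 dist12 p1 p2] .
  note decompose = homog_lin_in_concurrent_basis[OF indep p1 p2 pL]
  have "homog_lin t1 t2 t3 \<in> monomial_span ?A ?B ?L 1" for t1 t2 t3
    using decompose[of t1 t2 t3] monomial_span_linear_form by metis
  moreover have "varX = homog_lin 1 0 0" "varY = homog_lin 0 1 0" "varZ = homog_lin 0 0 1"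
    by (simp_all add: homog_lin_def const3_one const3_zero)
  ultimately have "g \<in> monomial_span ?A ?B ?L d"
    using homogeneous_in_monomial_span[OF _ _ _ g] by metis
  moreover obtain s1 s2 where "?C = const3 s1 * ?A + const3 s2 * ?B"
    using decompose[of a3 b3 c3] p3 by (metis add_0_right const3_zero mult_zero_left)
  ultimately have "?C ^ (r + 1) * g \<in> power_ideal_component ?A ?B ?C ?L r d"
    using power_times_monomial_span_in_power_ideal_component homogeneous_homog_lin hd by blast
  then show ?thesis by (elim power_ideal_componentE) blast
qed

end
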